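(* For every $n\ge2$ and every $n\times n$ Hermitian matrix $A$, $Y_{n,n-1}(A)\succ X_{n-1}(A)$; that is, the concatenation of $n-1$ copies of $\lambda(A)$ majorizes the vector of all eigenvalues of all $(n-1)\times(n-1)$ principal submatrices of $A$.
   Context: $\lambda(A)$ denotes the vector of eigenvalues of $A$ with multiplicity. For $1\le m\le n$, $X_m(A)$ is the vector listing the eigenvalues, with multiplicity, of all $\binom nm$ principal $m\times m$ submatrices of $A$, and $Y_{n,m}(A)$ is the concatenation of $\binom{n-1}{m-1}$ copies of $\lambda(A)$. For $x,y\in\mathbb R^N$, $x\succ y$ means $\sum_{i=1}^k x^{\downarrow}_i\ge\sum_{i=1}^k y^{\downarrow}_i$ for $k=1,\dots,N$ with equality at $k=N$, where $x^{\downarrow}$ is the non-increasing rearrangement. *)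

theory Defs
  imports "Jordan_Normal_Form.Char_Poly" "Jordan_Normal_Form.Determinant"
    "HOL-Computational_Algebra.Polynomial"
begin

definition hermitian_mat :: "nat \<Rightarrow> complex mat \<Rightarrow> bool" where
  "hermitian_mat n A \<longleftrightarrow> A \<in> carrier_mat n n \<and>
     (\<forall>i<n. \<forall>j<n. A $$ (i, j) = cnj (A $$ (j, i)))"

text \<open>lambda(A): eigenvalues with (algebraic) multiplicity, i.e. the roots of the
  characteristic polynomial with multiplicity; for Hermitian matrices these are real,
  so we take real parts.  Vectors are represented as multisets since majorization
  only depends on the non-increasing rearrangement.\<close>
definition eigs :: "complex mat \<Rightarrow> real multiset" where
  "eigs A = image_mset Re (proots (char_poly A))"

definition X_pred :: "nat \<Rightarrow> complex mat \<Rightarrow> real multiset" where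
  "X_pred n A = (\<Sum>i<n. eigs (mat_delete A i i))"

text \<open>Y_{n,n-1}(A): binom(n-1, n-2) = n-1 copies of lambda(A).\<close>
definition Y_pred :: "nat \<Rightarrow> complex mat \<Rightarrow> real multiset" where
  "Y_pred n A = repeat_mset (n - 1) (eigs A)"

definition desc :: "real multiset \<Rightarrow> real list" where
  "desc M = rev (sorted_list_of_multiset M)"

definition majorizes :: "real multiset \<Rightarrow> real multiset \<Rightarrow> bool" where
  "majorizes x y \<longleftrightarrow> size x = size y \<and>
     (\<forall>k\<in>{1..size x}. sum_list (take k (desc y)) \<le> sum_list (take k (desc x))) \<and>
     sum_list (desc x) = sum_list (desc y)"

end

theory Submission
  imports Defs "Jordan_Normal_Form.Schur_Decomposition"
begin

text \<open>Diagonalise \<open>A = U diag(d) U\<^sup>*\<close> and each principal submatrix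
  \<open>A\<^sub>i = E\<^sub>i\<^sup>* A E\<^sub>i = V\<^sub>i diag(e\<^sub>i) V\<^sub>i\<^sup>*\<close>, where \<open>E\<^sub>i\<close> is the isometry skipping coordinate \<open>i\<close>.
  For \<open>G\<^sub>i = U\<^sup>* E\<^sub>i V\<^sub>i\<close> the eigenvalue \<open>e\<^sub>i k\<close> equals \<open>\<Sum>\<^sub>l |G\<^sub>i(l,k)|\<^sup>2 d l\<close>, a convex combination
  of the \<open>d l\<close>, and the total weight of each \<open>d l\<close> over all pairs \<open>(i,k)\<close> is
  \<open>\<Sum>\<^sub>i (1 - |U(i,l)|\<^sup>2) = n - 1\<close>. Hence the plain sums agree, and convexity of \<open>x \<mapsto> max (x - t) 0\<close>
  bounds the hinge sum of the \<open>e\<^sub>i k\<close> by \<open>n - 1\<close> times that of the \<open>d l\<close>, for every \<open>t\<close>;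
  these inequalities characterise majorization.\<close>

section \<open>Conjugate transpose and unitary matrices\<close>

lemma dim_mat_adjoint [simp]:
  "dim_row (mat_adjoint A) = dim_col A" "dim_col (mat_adjoint A) = dim_row A"
  by (simp_all add: mat_adjoint_def)

lemma mat_adjoint_carrier [simp]: "A \<in> carrier_mat m n \<Longrightarrow> mat_adjoint A \<in> carrier_mat n m"
  unfolding carrier_mat_def by simp

lemma index_mat_adjoint [simp]:
  "i < dim_col A \<Longrightarrow> j < dim_row A \<Longrightarrow> mat_adjoint A $$ (i, j) = cnj (A $$ (j, i))"
  by (simp add: mat_adjoint_def mat_of_rows_def)

lemma mat_adjoint_adjoint [simp]: "mat_adjoint (mat_adjoint (A :: complex mat)) = A"
  by (rule eq_matI) auto

lemma mat_adjoint_one [simp]: "mat_adjoint (1\<^sub>m n :: complex mat) = 1\<^sub>m n"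
  by (rule eq_matI) auto

lemma index_mult_mat_sum:
  assumes "A \<in> carrier_mat m k" "B \<in> carrier_mat k n" "i < m" "j < n"
  shows "(A * B) $$ (i, j) = (\<Sum>l<k. A $$ (i, l) * B $$ (l, j))"
  using assms by (simp add: scalar_prod_def atLeast0LessThan)

lemma assoc_mult_mat_dims:
  "dim_col A = dim_row B \<Longrightarrow> dim_col B = dim_row C \<Longrightarrow> A * B * C = A * (B * C)"
  by (rule assoc_mult_mat[of A "dim_row A" "dim_col A" B "dim_col B" C "dim_col C"]) auto

lemma mat_adjoint_mult:
  fixes A B :: "complex mat"
  assumes "dim_col A = dim_row B"
  shows "mat_adjoint (A * B) = mat_adjoint B * mat_adjoint A"
proof (rule eq_matI)
  define m k n where "m = dim_row A" and "k = dim_col A" and "n = dim_col B"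
  have A: "A \<in> carrier_mat m k" and B: "B \<in> carrier_mat k n"
    using assms by (auto simp: m_def k_def n_def)
  fix i j assume "i < dim_row (mat_adjoint B * mat_adjoint A)" "j < dim_col (mat_adjoint B * mat_adjoint A)"
  then have i: "i < n" and j: "j < m" using A B by auto
  have "mat_adjoint (A * B) $$ (i, j) = cnj (\<Sum>l<k. A $$ (j, l) * B $$ (l, i))"
    using A B i j index_mult_mat_sum[OF A B j i] by simp
  also have "\<dots> = (\<Sum>l<k. mat_adjoint B $$ (i, l) * mat_adjoint A $$ (l, j))"
    using A B i j by (simp add: mult.commute)
  also have "\<dots> = (mat_adjoint B * mat_adjoint A) $$ (i, j)"
    by (rule index_mult_mat_sum[symmetric]) (use A B i j in auto)
  finally show "mat_adjoint (A * B) $$ (i, j) = (mat_adjoint B * mat_adjoint A) $$ (i, j)" .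
qed auto

lemma hermitian_mat_iff_adjoint:
  "hermitian_mat n A \<longleftrightarrow> A \<in> carrier_mat n n \<and> mat_adjoint A = A"
proof
  assume "hermitian_mat n A"
  then have A: "A \<in> carrier_mat n n" and h: "\<forall>i<n. \<forall>j<n. A $$ (i, j) = cnj (A $$ (j, i))"
    unfolding hermitian_mat_def by blast+
  have "mat_adjoint A = A"
  proof (rule eq_matI)
    fix i j assume "i < dim_row A" "j < dim_col A"
    then show "mat_adjoint A $$ (i, j) = A $$ (i, j)" using A h[rule_format, of j i] by simp
  qed (use A in simp_all)
  with A show "A \<in> carrier_mat n n \<and> mat_adjoint A = A" by blast
next
  assume *: "A \<in> carrier_mat n n \<and> mat_adjoint A = A"
  show "hermitian_mat n A"
    unfolding hermitian_mat_def
  proof (intro conjI allI impI)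
    fix i j assume "i < n" "j < n"
    then show "A $$ (i, j) = cnj (A $$ (j, i))"
      using * index_mat_adjoint[of i A j] by auto
  qed (use * in simp)
qed

lemma index_mat_delete [simp]:
  "r < dim_row A - 1 \<Longrightarrow> c < dim_col A - 1 \<Longrightarrow>
    mat_delete A i j $$ (r, c) = A $$ (insert_index i r, insert_index j c)"
  by (simp add: mat_delete_def insert_index_def)

lemma hermitian_mat_delete:
  assumes "hermitian_mat n A" "i < n"
  shows "hermitian_mat (n - 1) (mat_delete A i i)"
  unfolding hermitian_mat_def
proof (intro conjI allI impI)
  show "mat_delete A i i \<in> carrier_mat (n - 1) (n - 1)"
    using assms mat_delete_carrier by (auto simp: hermitian_mat_def)
  fix r c assume rc: "r < n - 1" "c < n - 1"
  have A: "A \<in> carrier_mat n n" and h: "\<forall>i<n. \<forall>j<n. A $$ (i, j) = cnj (A $$ (j, i))"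
    using assms(1) unfolding hermitian_mat_def by blast+
  have "insert_index i r < n" "insert_index i c < n"
    using rc by (auto simp: insert_index_def)
  then have "A $$ (insert_index i r, insert_index i c) = cnj (A $$ (insert_index i c, insert_index i r))"
    using h by blast
  then show "mat_delete A i i $$ (r, c) = cnj (mat_delete A i i $$ (c, r))"
    using A rc by simp
qed

lemma hermitian_mat_congruence:
  assumes "hermitian_mat n A" and W: "W \<in> carrier_mat n m"
  shows "hermitian_mat m (mat_adjoint W * A * W)"
proof -
  have A: "A \<in> carrier_mat n n" and hA: "mat_adjoint A = A"
    using assms(1) by (auto simp: hermitian_mat_iff_adjoint)
  have "mat_adjoint (mat_adjoint W * A * W) = mat_adjoint W * A * W"
    using A W hA by (simp add: mat_adjoint_mult assoc_mult_mat_dims)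
  moreover have "mat_adjoint W * A * W \<in> carrier_mat m m"
    using A W by auto
  ultimately show ?thesis
    by (simp add: hermitian_mat_iff_adjoint)
qed

definition unitary_mat :: "nat \<Rightarrow> complex mat \<Rightarrow> bool" where
  "unitary_mat n U \<longleftrightarrow> U \<in> carrier_mat n n \<and> mat_adjoint U * U = 1\<^sub>m n"

lemma unitary_mat_right_inverse:
  "unitary_mat n U \<Longrightarrow> U * mat_adjoint U = 1\<^sub>m n"
  unfolding unitary_mat_def by (metis mat_adjoint_carrier mat_mult_left_right_inverse)

lemma unitary_mat_mult:
  assumes "unitary_mat n U" "unitary_mat n V"
  shows "unitary_mat n (U * V)"
proof -
  have U: "U \<in> carrier_mat n n" and V: "V \<in> carrier_mat n n"
    using assms by (auto simp: unitary_mat_def)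
  have "mat_adjoint (U * V) * (U * V) = mat_adjoint V * ((mat_adjoint U * U) * V)"
    using U V by (simp add: mat_adjoint_mult assoc_mult_mat_dims)
  then show ?thesis
    using assms U V by (simp add: unitary_mat_def)
qed

lemma dim_mat_diag [simp]: "dim_row (mat_diag n f) = n" "dim_col (mat_diag n f) = n"
  by (simp_all add: mat_diag_def)

lemma cnj_mult_of_real_mult: "cnj z * complex_of_real c * z = complex_of_real ((cmod z)\<^sup>2 * c)"
  by (simp only: of_real_mult complex_norm_square) (simp add: algebra_simps)

lemma diag_entry_adjoint_mult_mat_diag_mult:
  assumes G: "G \<in> carrier_mat n m" and k: "k < m"
  shows "(mat_adjoint G * mat_diag n (\<lambda>l. complex_of_real (d l)) * G) $$ (k, k)
    = complex_of_real (\<Sum>l<n. (cmod (G $$ (l, k)))\<^sup>2 * d l)"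
proof -
  have "(mat_adjoint G * mat_diag n (\<lambda>l. complex_of_real (d l)) * G) $$ (k, k)
      = (\<Sum>l<n. cnj (G $$ (l, k)) * complex_of_real (d l) * G $$ (l, k))"
    using G k
    by (simp add: mat_diag_mult_right[of _ m] index_mult_mat_sum[of _ m n _ m] del: index_mult_mat(1))
  also have "\<dots> = (\<Sum>l<n. complex_of_real ((cmod (G $$ (l, k)))\<^sup>2 * d l))"
    by (simp only: cnj_mult_of_real_mult)
  finally show ?thesis by simp
qed

lemma diag_entry_adjoint_mult:
  assumes "G \<in> carrier_mat n m" "k < m"
  shows "(mat_adjoint G * G) $$ (k, k) = complex_of_real (\<Sum>l<n. (cmod (G $$ (l, k)))\<^sup>2)"
  using diag_entry_adjoint_mult_mat_diag_mult[OF assms, of "\<lambda>_. 1"] assms by simp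

lemma diag_entry_mult_adjoint:
  assumes "G \<in> carrier_mat n m" "l < n"
  shows "(G * mat_adjoint G) $$ (l, l) = complex_of_real (\<Sum>k<m. (cmod (G $$ (l, k)))\<^sup>2)"
  using diag_entry_adjoint_mult[of "mat_adjoint G" m n l] assms by simp

lemma unitary_mat_col_norm:
  assumes "unitary_mat n U" "l < n"
  shows "(\<Sum>r<n. (cmod (U $$ (r, l)))\<^sup>2) = 1"
proof -
  have "complex_of_real (\<Sum>r<n. (cmod (U $$ (r, l)))\<^sup>2) = (mat_adjoint U * U) $$ (l, l)"
    using assms by (intro diag_entry_adjoint_mult[symmetric]) (auto simp: unitary_mat_def)
  also have "\<dots> = 1"
    using assms by (simp add: unitary_mat_def)
  finally show ?thesis
    by (metis of_real_eq_1_iff)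
qed

section \<open>Spectral theorem for Hermitian matrices\<close>

text \<open>The Schur decomposition of Jordan_Normal_Form uses Gram-Schmidt without normalisation, so its
  similarity transformation need not be unitary; the spectral theorem is proved here by deflation.\<close>

definition cons_block_mat :: "'a :: zero \<Rightarrow> 'a mat \<Rightarrow> 'a mat" where
  "cons_block_mat c M = mat (Suc (dim_row M)) (Suc (dim_col M))
     (\<lambda>(i, j). if i = 0 \<and> j = 0 then c else if i = 0 \<or> j = 0 then 0 else M $$ (i - 1, j - 1))"

lemma dim_cons_block_mat [simp]:
  "dim_row (cons_block_mat c M) = Suc (dim_row M)" "dim_col (cons_block_mat c M) = Suc (dim_col M)"
  by (simp_all add: cons_block_mat_def)

lemma cons_block_mat_carrier [simp]:
  "M \<in> carrier_mat m n \<Longrightarrow> cons_block_mat c M \<in> carrier_mat (Suc m) (Suc n)"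
  unfolding carrier_mat_def by simp

lemma index_cons_block_mat:
  "i < Suc (dim_row M) \<Longrightarrow> j < Suc (dim_col M) \<Longrightarrow> cons_block_mat c M $$ (i, j) =
    (if i = 0 \<and> j = 0 then c else if i = 0 \<or> j = 0 then 0 else M $$ (i - 1, j - 1))"
  by (simp add: cons_block_mat_def)

lemma cons_block_mat_mult:
  fixes M N :: "'a :: semiring_0 mat"
  assumes M: "M \<in> carrier_mat m k" and N: "N \<in> carrier_mat k n"
  shows "cons_block_mat a M * cons_block_mat b N = cons_block_mat (a * b) (M * N)"
proof (rule eq_matI)
  fix i j assume "i < dim_row (cons_block_mat (a * b) (M * N))" "j < dim_col (cons_block_mat (a * b) (M * N))"
  then have i: "i < Suc m" and j: "j < Suc n" using M N by auto
  have "(cons_block_mat a M * cons_block_mat b N) $$ (i, j)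
      = (\<Sum>l<Suc k. cons_block_mat a M $$ (i, l) * cons_block_mat b N $$ (l, j))"
    by (rule index_mult_mat_sum) (use M N i j in auto)
  also have "\<dots> = cons_block_mat a M $$ (i, 0) * cons_block_mat b N $$ (0, j)
      + (\<Sum>l<k. cons_block_mat a M $$ (i, Suc l) * cons_block_mat b N $$ (Suc l, j))"
    by (rule sum.lessThan_Suc_shift)
  also have "\<dots> = cons_block_mat (a * b) (M * N) $$ (i, j)"
    using M N i j by (cases i; cases j)
      (simp_all add: index_cons_block_mat index_mult_mat_sum[OF M N] del: index_mult_mat(1))
  finally show "(cons_block_mat a M * cons_block_mat b N) $$ (i, j) = cons_block_mat (a * b) (M * N) $$ (i, j)" .
qed (use M N in auto)

lemma mat_adjoint_cons_block_mat:
  "mat_adjoint (cons_block_mat c M) = cons_block_mat (cnj c) (mat_adjoint M)"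
  by (rule eq_matI) (auto simp: index_cons_block_mat)

lemma cons_block_mat_one: "cons_block_mat 1 (1\<^sub>m m) = 1\<^sub>m (Suc m)"
  by (rule eq_matI) (auto simp: index_cons_block_mat)

lemma mat_diag_Suc: "mat_diag (Suc m) (case_nat c f) = cons_block_mat c (mat_diag m f)"
  by (rule eq_matI) (auto simp: index_cons_block_mat mat_diag_def split: nat.split)

lemma cons_block_mat_delete:
  assumes A: "A \<in> carrier_mat (Suc m) (Suc m)"
    and border: "\<And>i. 0 < i \<Longrightarrow> i < Suc m \<Longrightarrow> A $$ (i, 0) = 0 \<and> A $$ (0, i) = 0"
  shows "A = cons_block_mat (A $$ (0, 0)) (mat_delete A 0 0)"
proof (rule eq_matI)
  fix i j assume "i < dim_row (cons_block_mat (A $$ (0, 0)) (mat_delete A 0 0))"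
    "j < dim_col (cons_block_mat (A $$ (0, 0)) (mat_delete A 0 0))"
  then have i: "i < Suc m" and j: "j < Suc m" using A by auto
  show "A $$ (i, j) = cons_block_mat (A $$ (0, 0)) (mat_delete A 0 0) $$ (i, j)"
    using A i j border[of i] border[of j] by (cases i; cases j) (auto simp: index_cons_block_mat)
qed (use A in auto)

lemma unitary_cons_block_mat:
  assumes "unitary_mat m V"
  shows "unitary_mat (Suc m) (cons_block_mat 1 V)"
  using assms cons_block_mat_mult[of "mat_adjoint V" m m V m 1 1]
  by (simp add: unitary_mat_def mat_adjoint_cons_block_mat cons_block_mat_one)

lemma unitary_mat_of_corthogonal:
  assumes ws: "set ws \<subseteq> carrier_vec n" "corthogonal ws" "length ws = n"
  defines "nv c \<equiv> sqrt (\<Sum>r<n. (cmod (ws ! c $ r))\<^sup>2)"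
  shows "unitary_mat n (mat n n (\<lambda>(r, c). ws ! c $ r / complex_of_real (nv c)))"
    (is "unitary_mat n ?W")
proof -
  have wsc: "ws ! c \<in> carrier_vec n" if "c < n" for c
    using ws that by auto
  have sprod: "ws ! j \<bullet>c ws ! i = (\<Sum>r<n. ws ! j $ r * cnj (ws ! i $ r))" if "i < n" "j < n" for i j
    using wsc[OF that(1)] wsc[OF that(2)] by (simp add: scalar_prod_def atLeast0LessThan)
  have sprod_self: "ws ! c \<bullet>c ws ! c = complex_of_real ((nv c)\<^sup>2)" if c: "c < n" for c
  proof -
    have "ws ! c \<bullet>c ws ! c = complex_of_real (\<Sum>r<n. (cmod (ws ! c $ r))\<^sup>2)"
      using sprod[OF c c] by (simp only: of_real_sum complex_norm_square)
    then show ?thesis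
      by (simp add: nv_def sum_nonneg)
  qed
  have nv_pos: "nv c > 0" if c: "c < n" for c
  proof -
    have "ws ! c \<bullet>c ws ! c \<noteq> 0"
      using corthogonalD[OF ws(2), of c c] c ws(3) by auto
    then have "nv c \<noteq> 0"
      using sprod_self[OF c] by auto
    moreover have "nv c \<ge> 0"
      by (simp add: nv_def sum_nonneg)
    ultimately show ?thesis
      by simp
  qed
  have "mat_adjoint ?W * ?W = 1\<^sub>m n"
  proof (rule eq_matI)
    fix i j assume "i < dim_row (1\<^sub>m n)" "j < dim_col (1\<^sub>m n)"
    then have i: "i < n" and j: "j < n" by auto
    have "(mat_adjoint ?W * ?W) $$ (i, j)
        = (ws ! j \<bullet>c ws ! i) / (complex_of_real (nv i) * complex_of_real (nv j))"
      using i j by (simp add: index_mult_mat_sum[of _ n n _ n] sprod sum_divide_distrib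
          mult.commute del: index_mult_mat(1))
    also have "\<dots> = 1\<^sub>m n $$ (i, j)"
      using i j ws nv_pos[OF i] sprod_self[OF i] corthogonalD[OF ws(2), of j i]
      by (cases "i = j") (auto simp: power2_eq_square)
    finally show "(mat_adjoint ?W * ?W) $$ (i, j) = 1\<^sub>m n $$ (i, j)" .
  qed auto
  then show ?thesis
    by (simp add: unitary_mat_def)
qed

lemma unitary_mat_with_first_column:
  fixes v :: "complex vec"
  assumes v: "v \<in> carrier_vec n" "v \<noteq> 0\<^sub>v n"
  obtains W c where "unitary_mat n W" "col W 0 = c \<cdot>\<^sub>v v"
proof -
  interpret cof_vec_space n "TYPE(complex)" .
  define b where "b = basis_completion v"
  have b: "distinct b" "\<not> lin_dep (set b)" "set b \<subseteq> carrier_vec n" "length b = n"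
    using basis_completion[OF v] by (auto simp: b_def)
  obtain vs where bv: "b = v # vs"
    by (simp add: b_def basis_completion_def Let_def)
  define ws where "ws = gram_schmidt n b"
  have ws: "set ws \<subseteq> carrier_vec n" "corthogonal ws" "length ws = n"
    using gram_schmidt_result[OF b(3,1,2) ws_def] b(4) by auto
  have n: "0 < n"
    using v by (cases n) auto
  have "hd ws = v"
    using gram_schmidt_hd[OF v(1), of vs] bv ws_def by simp
  then have ws0: "ws ! 0 = v"
    using ws(3) n by (cases ws) auto
  define nv where "nv = sqrt (\<Sum>r<n. (cmod (ws ! 0 $ r))\<^sup>2)"
  let ?W = "mat n n (\<lambda>(r, c). ws ! c $ r / complex_of_real (sqrt (\<Sum>r<n. (cmod (ws ! c $ r))\<^sup>2)))"
  have "col ?W 0 = (1 / complex_of_real nv) \<cdot>\<^sub>v v"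
    using n v ws0 by (auto simp: nv_def)
  then show thesis
    using that unitary_mat_of_corthogonal[OF ws] by blast
qed

lemma congruence_mult_assoc:
  fixes W C D :: "complex mat"
  assumes "W \<in> carrier_mat n n" "C \<in> carrier_mat n n" "D \<in> carrier_mat n n"
  shows "W * C * D * mat_adjoint (W * C) = W * (C * D * mat_adjoint C) * mat_adjoint W"
  using assms by (simp add: mat_adjoint_mult assoc_mult_mat_dims)

lemma hermitian_deflation:
  assumes A: "hermitian_mat (Suc m) A" and W: "unitary_mat (Suc m) W"
    and eigen: "A *\<^sub>v col W 0 = a \<cdot>\<^sub>v col W 0"
  defines "A' \<equiv> mat_adjoint W * A * W"
  shows "A' = cons_block_mat (complex_of_real (Re a)) (mat_delete A' 0 0)"
proof -
  have Ac: "A \<in> carrier_mat (Suc m) (Suc m)" and Wc: "W \<in> carrier_mat (Suc m) (Suc m)"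
    using A W by (auto simp: hermitian_mat_def unitary_mat_def)
  have hA': "hermitian_mat (Suc m) A'"
    unfolding A'_def by (rule hermitian_mat_congruence[OF A Wc])
  have "col A' 0 = mat_adjoint W *\<^sub>v (A *\<^sub>v col W 0)"
    using Ac Wc col_mult2[of "mat_adjoint W" "Suc m" "Suc m" "A * W" "Suc m" 0]
      col_mult2[of A "Suc m" "Suc m" W "Suc m" 0]
    by (simp add: A'_def assoc_mult_mat_dims)
  also have "\<dots> = a \<cdot>\<^sub>v col (mat_adjoint W * W) 0"
    using Wc col_mult2[of "mat_adjoint W" "Suc m" "Suc m" W "Suc m" 0]
      mult_mat_vec[of "mat_adjoint W" "Suc m" "Suc m" "col W 0" a]
    by (simp add: eigen col_carrier_vec[of 0 "Suc m" W "Suc m"])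
  finally have col0: "col A' 0 = a \<cdot>\<^sub>v col (1\<^sub>m (Suc m)) 0"
    using W by (simp add: unitary_mat_def)
  have A'c: "A' \<in> carrier_mat (Suc m) (Suc m)"
    using hA' by (simp add: hermitian_mat_def)
  have first_col: "A' $$ (i, 0) = (if i = 0 then a else 0)" if "i < Suc m" for i
    using arg_cong[OF col0, of "\<lambda>v. v $ i"] A'c that by auto
  have first_row: "A' $$ (0, i) = cnj (A' $$ (i, 0))" if "i < Suc m" for i
    using hA' that unfolding hermitian_mat_def by blast
  have "cnj a = a"
    using first_row[of 0] first_col[of 0] by simp
  then have a_real: "complex_of_real (Re a) = a"
    by (metis Reals_cnj_iff complex_is_Real_iff of_real_Re)
  show ?thesis
    using cons_block_mat_delete[OF A'c] first_col first_row a_real by auto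
qed

theorem hermitian_unitary_diagonalization:
  assumes "hermitian_mat n A"
  shows "\<exists>U d. unitary_mat n U \<and> A = U * mat_diag n (\<lambda>l. complex_of_real (d l)) * mat_adjoint U"
  using assms
proof (induction n arbitrary: A)
  case 0
  then have "A = 1\<^sub>m 0 * mat_diag 0 (\<lambda>l. complex_of_real 0) * mat_adjoint (1\<^sub>m 0)"
    by (intro eq_matI) (auto simp: hermitian_mat_def)
  moreover have "unitary_mat 0 (1\<^sub>m 0)"
    by (simp add: unitary_mat_def)
  ultimately show ?case
    by (intro exI[of _ "1\<^sub>m 0"] exI[of _ "\<lambda>_. 0"]) simp
next
  case (Suc m)
  have Ac: "A \<in> carrier_mat (Suc m) (Suc m)"
    using Suc.prems by (simp add: hermitian_mat_def)
  obtain as where cp: "char_poly A = (\<Prod>a\<leftarrow>as. [:- a, 1:])" and "length as = Suc m"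
    using char_poly_factorized[OF Ac] by blast
  then obtain a where "a \<in> set as"
    by (cases as) auto
  then have "eigenvalue A a"
    by (simp add: eigenvalue_root_char_poly[OF Ac] cp poly_prod_list_zero_iff)
  then have "eigenvector A (find_eigenvector A a) a"
    by (rule find_eigenvector[OF Ac])
  then obtain v where v: "v \<in> carrier_vec (Suc m)" "v \<noteq> 0\<^sub>v (Suc m)"
    and Av: "A *\<^sub>v v = a \<cdot>\<^sub>v v"
    using Ac unfolding eigenvector_def by auto
  obtain W c where W: "unitary_mat (Suc m) W" and Wv: "col W 0 = c \<cdot>\<^sub>v v"
    using unitary_mat_with_first_column[OF v] by blast
  have Wc: "W \<in> carrier_mat (Suc m) (Suc m)"
    using W by (simp add: unitary_mat_def)
  have "A *\<^sub>v col W 0 = a \<cdot>\<^sub>v col W 0"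
    using Ac v Av by (simp add: Wv mult_mat_vec smult_smult_assoc mult.commute)
  define A' where "A' = mat_adjoint W * A * W"
  define B where "B = mat_delete A' 0 0"
  have A'B: "A' = cons_block_mat (complex_of_real (Re a)) B"
    unfolding A'_def B_def by (rule hermitian_deflation[OF Suc.prems W]) fact
  have "hermitian_mat m B"
    using hermitian_mat_delete[OF hermitian_mat_congruence[OF Suc.prems Wc], of 0]
    by (simp add: A'_def B_def)
  then obtain V e where V: "unitary_mat m V"
      and Be: "B = V * mat_diag m (\<lambda>l. complex_of_real (e l)) * mat_adjoint V"
    using Suc.IH by blast
  have Vc: "V \<in> carrier_mat m m"
    using V by (simp add: unitary_mat_def)
  define U where "U = W * cons_block_mat 1 V"
  define d where "d = case_nat (Re a) e"
  have U: "unitary_mat (Suc m) U"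
    unfolding U_def by (rule unitary_mat_mult[OF W unitary_cons_block_mat[OF V]])
  have "(\<lambda>l. complex_of_real (d l)) = case_nat (complex_of_real (Re a)) (\<lambda>l. complex_of_real (e l))"
    by (auto simp: d_def fun_eq_iff split: nat.split)
  then have "mat_diag (Suc m) (\<lambda>l. complex_of_real (d l))
      = cons_block_mat (complex_of_real (Re a)) (mat_diag m (\<lambda>l. complex_of_real (e l)))"
    by (simp add: mat_diag_Suc)
  then have "cons_block_mat 1 V * mat_diag (Suc m) (\<lambda>l. complex_of_real (d l))
      * mat_adjoint (cons_block_mat 1 V) = A'"
    using Vc by (simp add: mat_adjoint_cons_block_mat cons_block_mat_mult[of _ m m _ m] A'B Be)
  then have "U * mat_diag (Suc m) (\<lambda>l. complex_of_real (d l)) * mat_adjoint U = W * A' * mat_adjoint W"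
    using Wc Vc unfolding U_def by (subst congruence_mult_assoc[of _ "Suc m"]) auto
  also have "\<dots> = (W * mat_adjoint W) * A * (W * mat_adjoint W)"
    using Wc Ac unfolding A'_def by (simp add: assoc_mult_mat_dims)
  also have "\<dots> = A"
    using Ac by (simp add: unitary_mat_right_inverse[OF W])
  finally show ?case
    using U by metis
qed

lemma proots_prod_linear: "proots (\<Prod>a\<leftarrow>xs. [:- a, 1:]) = mset (xs :: complex list)"
proof (induction xs)
  case (Cons x xs)
  have "proots ([:- x, 1:] * (\<Prod>a\<leftarrow>xs. [:- a, 1:]))
      = proots [:- x, 1:] + proots (\<Prod>a\<leftarrow>xs. [:- a, 1:])"
    by (rule proots_mult) (auto simp: prod_list_zero_iff)
  then show ?case
    using Cons by simp
qed simp

lemma eigs_unitary_diagonalization: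
  assumes U: "unitary_mat n U"
  shows "eigs (U * mat_diag n (\<lambda>l. complex_of_real (d l)) * mat_adjoint U) = image_mset d (mset_set {..<n})"
proof -
  let ?D = "mat_diag n (\<lambda>l. complex_of_real (d l))"
  have Uc: "U \<in> carrier_mat n n"
    using U by (simp add: unitary_mat_def)
  have "similar_mat_wit (U * ?D * mat_adjoint U) ?D U (mat_adjoint U)"
    using Uc U unitary_mat_right_inverse[OF U]
    by (intro similar_mat_witI[of _ _ n]) (auto simp: unitary_mat_def)
  then have "char_poly (U * ?D * mat_adjoint U) = char_poly ?D"
    by (intro char_poly_similar) (auto simp: similar_mat_def)
  also have "\<dots> = (\<Prod>a\<leftarrow>diag_mat ?D. [:- a, 1:])"
    by (rule char_poly_upper_triangular[of _ n]) (auto simp: upper_triangular_def mat_diag_def)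
  also have "diag_mat ?D = map (\<lambda>l. complex_of_real (d l)) [0..<n]"
    by (rule nth_equalityI) (auto simp: diag_mat_def mat_diag_def)
  finally have "proots (char_poly (U * ?D * mat_adjoint U)) = mset (map (\<lambda>l. complex_of_real (d l)) [0..<n])"
    by (simp only: proots_prod_linear)
  then show ?thesis
    by (simp add: eigs_def multiset.map_comp o_def mset_upt atLeast0LessThan)
qed

section \<open>Principal submatrices as compressions\<close>

definition deletion_embedding :: "nat \<Rightarrow> nat \<Rightarrow> complex mat" where
  "deletion_embedding n i = mat n (n - 1) (\<lambda>(r, c). if r = insert_index i c then 1 else 0)"

lemma dim_deletion_embedding [simp]:
  "dim_row (deletion_embedding n i) = n" "dim_col (deletion_embedding n i) = n - 1"
  by (simp_all add: deletion_embedding_def)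

lemma deletion_embedding_carrier [simp]: "deletion_embedding n i \<in> carrier_mat n (n - 1)"
  by (simp add: deletion_embedding_def)

lemma insert_index_less: "c < n - 1 \<Longrightarrow> insert_index i c < n"
  unfolding insert_index_def by auto

lemma index_mult_deletion_embedding:
  assumes M: "M \<in> carrier_mat k n" and r: "r < k" and c: "c < n - 1"
  shows "(M * deletion_embedding n i) $$ (r, c) = M $$ (r, insert_index i c)"
proof -
  have "(M * deletion_embedding n i) $$ (r, c)
      = (\<Sum>l<n. M $$ (r, l) * (if l = insert_index i c then 1 else 0))"
    using M r c by (simp add: index_mult_mat_sum[of _ k n _ "n - 1"] deletion_embedding_def del: index_mult_mat(1))
  also have "\<dots> = M $$ (r, insert_index i c)"
    using insert_index_less[OF c] by (simp add: if_distrib[of "\<lambda>x. _ * x"] cong: if_cong)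
  finally show ?thesis .
qed

lemma index_adjoint_deletion_embedding_mult:
  assumes M: "M \<in> carrier_mat n k" and c: "c < n - 1" and j: "j < k"
  shows "(mat_adjoint (deletion_embedding n i) * M) $$ (c, j) = M $$ (insert_index i c, j)"
proof -
  have "mat_adjoint (deletion_embedding n i) * M = mat_adjoint (mat_adjoint M * deletion_embedding n i)"
    using M by (simp add: mat_adjoint_mult)
  then have "(mat_adjoint (deletion_embedding n i) * M) $$ (c, j)
      = cnj ((mat_adjoint M * deletion_embedding n i) $$ (j, c))"
    using M c j by simp
  also have "(mat_adjoint M * deletion_embedding n i) $$ (j, c) = mat_adjoint M $$ (j, insert_index i c)"
    by (rule index_mult_deletion_embedding[OF mat_adjoint_carrier[OF M] j c])
  finally show ?thesis
    using M j insert_index_less[OF c] by simp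
qed

lemma mat_delete_eq_compression:
  assumes A: "A \<in> carrier_mat n n"
  shows "mat_delete A i i = mat_adjoint (deletion_embedding n i) * A * deletion_embedding n i"
proof (rule eq_matI)
  fix r c assume "r < dim_row (mat_adjoint (deletion_embedding n i) * A * deletion_embedding n i)"
    "c < dim_col (mat_adjoint (deletion_embedding n i) * A * deletion_embedding n i)"
  then have r: "r < n - 1" and c: "c < n - 1" by auto
  have "mat_adjoint (deletion_embedding n i) * A \<in> carrier_mat (n - 1) n"
    using A deletion_embedding_carrier by (intro mult_carrier_mat mat_adjoint_carrier)
  then have "(mat_adjoint (deletion_embedding n i) * A * deletion_embedding n i) $$ (r, c)
      = (mat_adjoint (deletion_embedding n i) * A) $$ (r, insert_index i c)"
    using r c by (rule index_mult_deletion_embedding)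
  also have "\<dots> = A $$ (insert_index i r, insert_index i c)"
    using A r insert_index_less[OF c] by (rule index_adjoint_deletion_embedding_mult)
  finally show "mat_delete A i i $$ (r, c) = (mat_adjoint (deletion_embedding n i) * A * deletion_embedding n i) $$ (r, c)"
    using A r c by simp
qed (use A in auto)

lemma deletion_embedding_isometry:
  "mat_adjoint (deletion_embedding n i) * deletion_embedding n i = 1\<^sub>m (n - 1)"
proof -
  have "mat_delete (1\<^sub>m n) i i = (1\<^sub>m (n - 1) :: complex mat)"
    by (rule eq_matI) (auto simp: insert_index_def)
  then show ?thesis
    using mat_delete_eq_compression[of "1\<^sub>m n" n i]
      right_mult_one_mat[OF mat_adjoint_carrier[OF deletion_embedding_carrier]] by simp
qed

lemma compression_eigenvalue_weights:
  assumes U: "unitary_mat n U" and V: "unitary_mat m V"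
    and K: "K \<in> carrier_mat n m" and isometry: "mat_adjoint K * K = 1\<^sub>m m"
    and compression: "mat_adjoint K * (U * mat_diag n (\<lambda>l. complex_of_real (d l)) * mat_adjoint U) * K
      = V * mat_diag m (\<lambda>k. complex_of_real (e k)) * mat_adjoint V"
  defines "G \<equiv> mat_adjoint U * K * V"
  shows "\<And>k. k < m \<Longrightarrow> e k = (\<Sum>l<n. (cmod (G $$ (l, k)))\<^sup>2 * d l)"
    and "\<And>k. k < m \<Longrightarrow> (\<Sum>l<n. (cmod (G $$ (l, k)))\<^sup>2) = 1"
    and "\<And>l. l < n \<Longrightarrow>
      (\<Sum>k<m. (cmod (G $$ (l, k)))\<^sup>2) = (\<Sum>c<m. (cmod ((mat_adjoint U * K) $$ (l, c)))\<^sup>2)"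
proof -
  let ?Dd = "mat_diag n (\<lambda>l. complex_of_real (d l))"
  let ?De = "mat_diag m (\<lambda>k. complex_of_real (e k))"
  have Uc: "U \<in> carrier_mat n n" and Vc: "V \<in> carrier_mat m m"
    using U V by (auto simp: unitary_mat_def)
  have Gc: "G \<in> carrier_mat n m"
    unfolding G_def using Uc K Vc by (intro mult_carrier_mat mat_adjoint_carrier)
  have adjG: "mat_adjoint G = mat_adjoint V * (mat_adjoint K * U)"
    using Uc K Vc by (simp add: G_def mat_adjoint_mult)
  have conj_G: "mat_adjoint G * M * G = mat_adjoint V * (mat_adjoint K * (U * M * mat_adjoint U) * K) * V"
    if "M \<in> carrier_mat n n" for M
    unfolding adjG using that Uc K Vc by (simp add: G_def assoc_mult_mat_dims)
  have "mat_adjoint G * ?Dd * G = (mat_adjoint V * V) * ?De * (mat_adjoint V * V)"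
    using Vc by (simp add: conj_G compression assoc_mult_mat_dims)
  then have GDG: "mat_adjoint G * ?Dd * G = ?De"
    using V by (simp add: unitary_mat_def)
  have "mat_adjoint G * G = mat_adjoint G * 1\<^sub>m n * G"
    using Gc by simp
  also have "\<dots> = 1\<^sub>m m"
    using Uc K V right_mult_one_mat[OF mat_adjoint_carrier[OF Vc]]
    by (simp add: conj_G unitary_mat_right_inverse[OF U] isometry unitary_mat_def)
  finally have GG: "mat_adjoint G * G = 1\<^sub>m m" .
  have "G * mat_adjoint G = (mat_adjoint U * K) * (V * mat_adjoint V) * mat_adjoint (mat_adjoint U * K)"
    unfolding adjG using Uc K Vc by (simp add: G_def mat_adjoint_mult assoc_mult_mat_dims)
  then have GG': "G * mat_adjoint G = (mat_adjoint U * K) * mat_adjoint (mat_adjoint U * K)"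
    using Uc K by (simp add: unitary_mat_right_inverse[OF V])
  show "e k = (\<Sum>l<n. (cmod (G $$ (l, k)))\<^sup>2 * d l)" if k: "k < m" for k
  proof -
    have "complex_of_real (e k) = (mat_adjoint G * ?Dd * G) $$ (k, k)"
      unfolding GDG using k by (simp add: mat_diag_def)
    also have "\<dots> = complex_of_real (\<Sum>l<n. (cmod (G $$ (l, k)))\<^sup>2 * d l)"
      by (rule diag_entry_adjoint_mult_mat_diag_mult[OF Gc k])
    finally show ?thesis
      by (simp only: of_real_eq_iff)
  qed
  show "(\<Sum>l<n. (cmod (G $$ (l, k)))\<^sup>2) = 1" if k: "k < m" for k
  proof -
    have "complex_of_real (\<Sum>l<n. (cmod (G $$ (l, k)))\<^sup>2) = (mat_adjoint G * G) $$ (k, k)"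
      by (rule diag_entry_adjoint_mult[OF Gc k, symmetric])
    then show ?thesis
      using k by (simp add: GG del: of_real_sum of_real_power)
  qed
  show "(\<Sum>k<m. (cmod (G $$ (l, k)))\<^sup>2) = (\<Sum>c<m. (cmod ((mat_adjoint U * K) $$ (l, c)))\<^sup>2)"
    if l: "l < n" for l
  proof -
    have "mat_adjoint U * K \<in> carrier_mat n m"
      using Uc K by (intro mult_carrier_mat mat_adjoint_carrier)
    then have "complex_of_real (\<Sum>k<m. (cmod (G $$ (l, k)))\<^sup>2)
        = complex_of_real (\<Sum>c<m. (cmod ((mat_adjoint U * K) $$ (l, c)))\<^sup>2)"
      using diag_entry_mult_adjoint[OF Gc l] diag_entry_mult_adjoint[of "mat_adjoint U * K" n m l] l
      by (simp only: GG')
    then show ?thesis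
      by (simp only: of_real_eq_iff)
  qed
qed

lemma sum_insert_index:
  fixes f :: "nat \<Rightarrow> 'a :: ab_group_add"
  assumes i: "i < n"
  shows "(\<Sum>c<n - 1. f (insert_index i c)) = (\<Sum>r<n. f r) - f i"
proof -
  have "insert_index i ` {..<n - 1} = {..<n} - {i}"
    using insert_index_image[of i "n - 1"] i by (simp add: atLeast0LessThan)
  then have "(\<Sum>c<n - 1. f (insert_index i c)) = sum f ({..<n} - {i})"
    using sum.reindex[OF insert_index_inj_on[of i "{..<n - 1}"], of f] by simp
  also have "\<dots> = (\<Sum>r<n. f r) - f i"
    using i by (simp add: sum_diff1)
  finally show ?thesis .
qed

lemma deletion_embedding_row_weight:
  assumes U: "unitary_mat n U" and i: "i < n" and l: "l < n"
  shows "(\<Sum>c<n - 1. (cmod ((mat_adjoint U * deletion_embedding n i) $$ (l, c)))\<^sup>2)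
    = 1 - (cmod (U $$ (i, l)))\<^sup>2"
proof -
  have Uc: "U \<in> carrier_mat n n"
    using U by (simp add: unitary_mat_def)
  have "(\<Sum>c<n - 1. (cmod ((mat_adjoint U * deletion_embedding n i) $$ (l, c)))\<^sup>2)
      = (\<Sum>c<n - 1. (cmod (U $$ (insert_index i c, l)))\<^sup>2)"
  proof (rule sum.cong[OF refl])
    fix c assume "c \<in> {..<n - 1}"
    then have c: "c < n - 1" by simp
    have "(mat_adjoint U * deletion_embedding n i) $$ (l, c) = mat_adjoint U $$ (l, insert_index i c)"
      by (rule index_mult_deletion_embedding[OF mat_adjoint_carrier[OF Uc] l c])
    then show "(cmod ((mat_adjoint U * deletion_embedding n i) $$ (l, c)))\<^sup>2
        = (cmod (U $$ (insert_index i c, l)))\<^sup>2"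
      using Uc l insert_index_less[OF c] by simp
  qed
  also have "\<dots> = (\<Sum>r<n. (cmod (U $$ (r, l)))\<^sup>2) - (cmod (U $$ (i, l)))\<^sup>2"
    by (rule sum_insert_index[OF i])
  finally show ?thesis
    using unitary_mat_col_norm[OF U l] by simp
qed

lemma principal_submatrix_eigenvalue_weights:
  assumes A: "hermitian_mat n A"
  obtains d e g where "eigs A = image_mset d (mset_set {..<n})"
    and "\<And>i. i < n \<Longrightarrow> eigs (mat_delete A i i) = image_mset (e i) (mset_set {..<n - 1})"
    and "\<And>i k l. 0 \<le> g (i, k) l"
    and "\<And>i k. i < n \<Longrightarrow> k < n - 1 \<Longrightarrow> e i k = (\<Sum>l<n. g (i, k) l * d l)"
    and "\<And>i k. i < n \<Longrightarrow> k < n - 1 \<Longrightarrow> (\<Sum>l<n. g (i, k) l) = 1"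
    and "\<And>l. l < n \<Longrightarrow> (\<Sum>(i, k)\<in>{..<n} \<times> {..<n - 1}. g (i, k) l) = real (n - 1)"
proof -
  obtain U d where U: "unitary_mat n U"
    and Ud: "A = U * mat_diag n (\<lambda>l. complex_of_real (d l)) * mat_adjoint U"
    using hermitian_unitary_diagonalization[OF A] by blast
  have "\<forall>i. \<exists>V e. i < n \<longrightarrow> unitary_mat (n - 1) V
      \<and> mat_delete A i i = V * mat_diag (n - 1) (\<lambda>k. complex_of_real (e k)) * mat_adjoint V"
    using hermitian_unitary_diagonalization[OF hermitian_mat_delete[OF A]] by blast
  then obtain V e where V: "\<And>i. i < n \<Longrightarrow> unitary_mat (n - 1) (V i)"
    and Ve: "\<And>i. i < n \<Longrightarrow>
      mat_delete A i i = V i * mat_diag (n - 1) (\<lambda>k. complex_of_real (e i k)) * mat_adjoint (V i)"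
    by metis
  define g where "g = (\<lambda>(i, k) l. (cmod ((mat_adjoint U * deletion_embedding n i * V i) $$ (l, k)))\<^sup>2)"
  have Ac: "A \<in> carrier_mat n n"
    using A by (simp add: hermitian_mat_def)
  have compression: "mat_adjoint (deletion_embedding n i)
      * (U * mat_diag n (\<lambda>l. complex_of_real (d l)) * mat_adjoint U) * deletion_embedding n i
      = V i * mat_diag (n - 1) (\<lambda>k. complex_of_real (e i k)) * mat_adjoint (V i)"
    if "i < n" for i
    using Ve[OF that] mat_delete_eq_compression[OF Ac, of i] Ud by simp
  note weights = compression_eigenvalue_weights[OF U V deletion_embedding_carrier
      deletion_embedding_isometry compression]
  show thesis
  proof (rule that)
    show "eigs A = image_mset d (mset_set {..<n})"
      unfolding Ud by (rule eigs_unitary_diagonalization[OF U])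
    show "eigs (mat_delete A i i) = image_mset (e i) (mset_set {..<n - 1})" if "i < n" for i
      unfolding Ve[OF that] by (rule eigs_unitary_diagonalization[OF V[OF that]])
    show "0 \<le> g (i, k) l" for i k l
      by (simp add: g_def)
    show "e i k = (\<Sum>l<n. g (i, k) l * d l)" if "i < n" "k < n - 1" for i k
      using weights(1)[OF that(1) that(1) that(2)] by (simp add: g_def)
    show "(\<Sum>l<n. g (i, k) l) = 1" if "i < n" "k < n - 1" for i k
      using weights(2)[OF that(1) that(1) that(2)] by (simp add: g_def)
    show "(\<Sum>(i, k)\<in>{..<n} \<times> {..<n - 1}. g (i, k) l) = real (n - 1)" if l: "l < n" for l
    proof -
      have "(\<Sum>(i, k)\<in>{..<n} \<times> {..<n - 1}. g (i, k) l) = (\<Sum>i<n. 1 - (cmod (U $$ (i, l)))\<^sup>2)"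
        using weights(3)[OF _ _ l] deletion_embedding_row_weight[OF U _ l]
        by (simp add: sum.cartesian_product[symmetric] g_def)
      also have "\<dots> = real (n - 1)"
        using unitary_mat_col_norm[OF U l] l by (simp add: sum_subtractf of_nat_diff)
      finally show ?thesis .
    qed
  qed
qed

section \<open>Majorization from hinge sums\<close>

lemma sum_hinge_le_of_substochastic:
  fixes e :: "'i \<Rightarrow> real" and d :: "'j \<Rightarrow> real" and g :: "'i \<Rightarrow> 'j \<Rightarrow> real"
  assumes nonneg: "\<And>i j. i \<in> I \<Longrightarrow> j \<in> J \<Longrightarrow> 0 \<le> g i j"
    and average: "\<And>i. i \<in> I \<Longrightarrow> e i = (\<Sum>j\<in>J. g i j * d j)"
    and rows: "\<And>i. i \<in> I \<Longrightarrow> (\<Sum>j\<in>J. g i j) = 1"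
    and cols: "\<And>j. j \<in> J \<Longrightarrow> (\<Sum>i\<in>I. g i j) \<le> c"
  shows "(\<Sum>i\<in>I. max (e i - t) 0) \<le> c * (\<Sum>j\<in>J. max (d j - t) 0)"
proof -
  have convex: "max (e i - t) 0 \<le> (\<Sum>j\<in>J. g i j * max (d j - t) 0)" if i: "i \<in> I" for i
  proof -
    have "e i - t = (\<Sum>j\<in>J. g i j * (d j - t))"
      using average[OF i] rows[OF i] by (simp add: right_diff_distrib sum_subtractf flip: sum_distrib_right)
    also have "\<dots> \<le> (\<Sum>j\<in>J. g i j * max (d j - t) 0)"
      using nonneg[OF i] by (intro sum_mono mult_left_mono) auto
    finally show ?thesis
      using nonneg[OF i] by (simp add: sum_nonneg)
  qed
  have "(\<Sum>i\<in>I. max (e i - t) 0) \<le> (\<Sum>i\<in>I. \<Sum>j\<in>J. g i j * max (d j - t) 0)"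
    using convex by (rule sum_mono)
  also have "\<dots> = (\<Sum>j\<in>J. (\<Sum>i\<in>I. g i j) * max (d j - t) 0)"
    by (subst sum.swap) (simp add: sum_distrib_right)
  also have "\<dots> \<le> (\<Sum>j\<in>J. c * max (d j - t) 0)"
    using cols by (intro sum_mono mult_right_mono) auto
  finally show ?thesis
    by (simp add: sum_distrib_left)
qed

lemma sum_eq_of_column_sums:
  fixes e :: "'i \<Rightarrow> real" and d :: "'j \<Rightarrow> real" and g :: "'i \<Rightarrow> 'j \<Rightarrow> real"
  assumes average: "\<And>i. i \<in> I \<Longrightarrow> e i = (\<Sum>j\<in>J. g i j * d j)"
    and cols: "\<And>j. j \<in> J \<Longrightarrow> (\<Sum>i\<in>I. g i j) = c"
  shows "(\<Sum>i\<in>I. e i) = c * (\<Sum>j\<in>J. d j)"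
proof -
  have "(\<Sum>i\<in>I. e i) = (\<Sum>j\<in>J. (\<Sum>i\<in>I. g i j) * d j)"
    using average by (simp add: sum.swap[of _ I] sum_distrib_right)
  also have "\<dots> = c * (\<Sum>j\<in>J. d j)"
    using cols by (simp add: sum_distrib_left)
  finally show ?thesis .
qed

lemma sum_list_le_hinge:
  "sum_list xs \<le> real (length xs) * t + sum_list (map (\<lambda>x. max (x - t) 0) xs)"
  by (induction xs) (auto simp: algebra_simps)

lemma sum_list_eq_hinge:
  "\<forall>y\<in>set ys. t \<le> y \<Longrightarrow>
    sum_list ys = real (length ys) * t + sum_list (map (\<lambda>x. max (x - t) 0) ys)"
  by (induction ys) (auto simp: algebra_simps)

lemma sum_list_hinge_eq_0:
  "\<forall>y\<in>set ys. y \<le> (t :: real) \<Longrightarrow> sum_list (map (\<lambda>x. max (x - t) 0) ys) = 0"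
  by (induction ys) (auto simp: max_def)

lemma sum_list_take_desc_eq_hinge:
  fixes ys :: "real list"
  assumes sorted: "sorted_wrt (\<ge>) ys" and k: "0 < k" "k \<le> length ys"
  defines "t \<equiv> ys ! (k - 1)"
  shows "sum_list (take k ys) = real k * t + sum_list (map (\<lambda>x. max (x - t) 0) ys)"
proof -
  have "ys = take (k - 1) ys @ t # drop k ys"
    using k id_take_nth_drop[of "k - 1" ys] by (simp add: t_def)
  then have "sorted_wrt (\<ge>) (take (k - 1) ys @ t # drop k ys)"
    using sorted by simp
  then have before: "\<forall>y\<in>set (take (k - 1) ys). t \<le> y"
    and tail: "\<forall>y\<in>set (drop k ys). y \<le> t"
    by (auto simp: sorted_wrt_append)
  have "take k ys = take (k - 1) ys @ [t]"
    using k take_Suc_conv_app_nth[of "k - 1" ys] by (simp add: t_def)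
  then have head: "\<forall>y\<in>set (take k ys). t \<le> y"
    using before by auto
  have "sum_list (map (\<lambda>x. max (x - t) 0) ys)
      = sum_list (map (\<lambda>x. max (x - t) 0) (take k ys))
        + sum_list (map (\<lambda>x. max (x - t) 0) (drop k ys))"
    by (subst append_take_drop_id[symmetric, of _ k]) (simp only: map_append sum_list_append)
  then show ?thesis
    using sum_list_eq_hinge[OF head] sum_list_hinge_eq_0[OF tail] k by simp
qed

lemma sum_list_take_le_hinge:
  fixes xs :: "real list"
  assumes "k \<le> length xs"
  shows "sum_list (take k xs) \<le> real k * t + sum_list (map (\<lambda>x. max (x - t) 0) xs)"
proof -
  let ?h = "\<lambda>x. max (x - t) 0"
  have "sum_list (map ?h xs) = sum_list (map ?h (take k xs)) + sum_list (map ?h (drop k xs))"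
    by (metis append_take_drop_id map_append sum_list_append)
  moreover have "0 \<le> sum_list (map ?h (drop k xs))"
    by (rule sum_list_nonneg) auto
  ultimately show ?thesis
    using sum_list_le_hinge[of "take k xs" t] assms by simp
qed

lemma mset_desc [simp]: "mset (desc M) = M"
  by (simp add: desc_def)

lemma length_desc [simp]: "length (desc M) = size M"
  by (metis mset_desc size_mset)

lemma sorted_desc: "sorted_wrt (\<ge>) (desc M)"
  by (simp add: desc_def sorted_wrt_rev)

lemma sum_list_map_desc: "sum_list (map f (desc M)) = sum_mset (image_mset f M)"
  by (metis mset_desc mset_map sum_mset_sum_list)

lemma sum_mset_image_mset_sum:
  "sum_mset (image_mset f (\<Sum>i\<in>I. M i)) = (\<Sum>i\<in>I. sum_mset (image_mset f (M i)))"
  by (induction I rule: infinite_finite_induct) auto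

lemma sum_mset_image_mset_repeat_mset:
  "sum_mset (image_mset f (repeat_mset k M)) = of_nat k * sum_mset (image_mset f M)"
proof -
  obtain S where S: "sum_mset (image_mset f M) = S"
    by blast
  have "sum_mset (image_mset f (repeat_mset k M)) = of_nat k * S"
    by (induction k) (simp_all add: S algebra_simps)
  then show ?thesis
    using S by simp
qed

lemma majorizes_of_hinge_sums_le:
  assumes size: "size X = size Y" and sum: "sum_mset X = sum_mset Y"
    and hinge: "\<And>t. sum_mset (image_mset (\<lambda>x. max (x - t) 0) X)
      \<le> sum_mset (image_mset (\<lambda>x. max (x - t) 0) Y)"
  shows "majorizes Y X"
  unfolding majorizes_def
proof (intro conjI ballI)
  show "size Y = size X"
    using size by simp
  show "sum_list (desc Y) = sum_list (desc X)"
    using sum sum_list_map_desc[of "\<lambda>x. x"] by simp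
  fix k assume k: "k \<in> {1..size Y}"
  define t where "t = desc Y ! (k - 1)"
  have "sum_list (take k (desc X)) \<le> real k * t + sum_list (map (\<lambda>x. max (x - t) 0) (desc X))"
    using k size by (intro sum_list_take_le_hinge) simp
  also have "\<dots> \<le> real k * t + sum_list (map (\<lambda>x. max (x - t) 0) (desc Y))"
    using hinge[of t] by (simp add: sum_list_map_desc)
  also have "\<dots> = sum_list (take k (desc Y))"
    using k sum_list_take_desc_eq_hinge[OF sorted_desc, of k Y] by (simp add: t_def)
  finally show "sum_list (take k (desc X)) \<le> sum_list (take k (desc Y))" .
qed

lemma majorizes_repeat_mset_of_weights:
  fixes d :: "nat \<Rightarrow> real" and e :: "nat \<Rightarrow> nat \<Rightarrow> real" and g :: "nat \<times> nat \<Rightarrow> nat \<Rightarrow> real"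
  assumes nonneg: "\<And>i k l. 0 \<le> g (i, k) l"
    and average: "\<And>i k. i < n \<Longrightarrow> k < m \<Longrightarrow> e i k = (\<Sum>l<n. g (i, k) l * d l)"
    and rows: "\<And>i k. i < n \<Longrightarrow> k < m \<Longrightarrow> (\<Sum>l<n. g (i, k) l) = 1"
    and cols: "\<And>l. l < n \<Longrightarrow> (\<Sum>(i, k)\<in>{..<n} \<times> {..<m}. g (i, k) l) = real m"
  shows "majorizes (repeat_mset m (image_mset d (mset_set {..<n})))
    (\<Sum>i<n. image_mset (e i) (mset_set {..<m}))"
proof -
  let ?I = "{..<n} \<times> {..<m}"
  have X: "sum_mset (image_mset f (\<Sum>i<n. image_mset (e i) (mset_set {..<m})))
      = (\<Sum>p\<in>?I. f (case_prod e p))" for f :: "real \<Rightarrow> real"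
  proof -
    have "sum_mset (image_mset f (\<Sum>i<n. image_mset (e i) (mset_set {..<m})))
        = (\<Sum>i<n. sum_mset (image_mset f (image_mset (e i) (mset_set {..<m}))))"
      by (simp only: sum_mset_image_mset_sum)
    also have "\<dots> = (\<Sum>i<n. \<Sum>k<m. f (e i k))"
      by (simp add: sum_unfold_sum_mset multiset.map_comp o_def)
    finally show ?thesis
      by (simp add: sum.cartesian_product')
  qed
  have Y: "sum_mset (image_mset f (repeat_mset m (image_mset d (mset_set {..<n}))))
      = real m * (\<Sum>l<n. f (d l))" for f :: "real \<Rightarrow> real"
    by (simp add: sum_mset_image_mset_repeat_mset multiset.map_comp o_def sum_unfold_sum_mset)
  show ?thesis
  proof (rule majorizes_of_hinge_sums_le)
    show "size (\<Sum>i<n. image_mset (e i) (mset_set {..<m}))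
      = size (repeat_mset m (image_mset d (mset_set {..<n})))"
      by (simp add: size_multiset_sum)
    have "(\<Sum>p\<in>?I. case_prod e p) = real m * (\<Sum>l<n. d l)"
      using average cols by (intro sum_eq_of_column_sums[where g = g]) auto
    then show "sum_mset (\<Sum>i<n. image_mset (e i) (mset_set {..<m}))
      = sum_mset (repeat_mset m (image_mset d (mset_set {..<n})))"
      using X[of "\<lambda>x. x"] Y[of "\<lambda>x. x"] by simp
    show "sum_mset (image_mset (\<lambda>x. max (x - t) 0) (\<Sum>i<n. image_mset (e i) (mset_set {..<m})))
      \<le> sum_mset (image_mset (\<lambda>x. max (x - t) 0) (repeat_mset m (image_mset d (mset_set {..<n}))))"
      for t
      unfolding X Y using nonneg average rows cols
      by (intro sum_hinge_le_of_substochastic[where g = g]) auto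
  qed
qed

theorem lemma4p3:
  fixes n :: nat and A :: "complex mat"
  assumes "n \<ge> 2" and "hermitian_mat n A"
  shows "majorizes (Y_pred n A) (X_pred n A)"
proof -
  obtain d e g where eigs_A: "eigs A = image_mset d (mset_set {..<n})"
    and eigs_sub: "\<And>i. i < n \<Longrightarrow> eigs (mat_delete A i i) = image_mset (e i) (mset_set {..<n - 1})"
    and weights: "\<And>i k l. 0 \<le> g (i, k) l"
      "\<And>i k. i < n \<Longrightarrow> k < n - 1 \<Longrightarrow> e i k = (\<Sum>l<n. g (i, k) l * d l)"
      "\<And>i k. i < n \<Longrightarrow> k < n - 1 \<Longrightarrow> (\<Sum>l<n. g (i, k) l) = 1"
      "\<And>l. l < n \<Longrightarrow> (\<Sum>(i, k)\<in>{..<n} \<times> {..<n - 1}. g (i, k) l) = real (n - 1)"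
    using principal_submatrix_eigenvalue_weights[OF assms(2)] by blast
  have "majorizes (repeat_mset (n - 1) (image_mset d (mset_set {..<n})))
      (\<Sum>i<n. image_mset (e i) (mset_set {..<n - 1}))"
    by (rule majorizes_repeat_mset_of_weights[OF weights])
  moreover have "X_pred n A = (\<Sum>i<n. image_mset (e i) (mset_set {..<n - 1}))"
    unfolding X_pred_def using eigs_sub by (intro sum.cong) auto
  ultimately show ?thesis
    by (simp add: Y_pred_def eigs_A)
qed

end
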